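(* Let $D_4(s,t) = 3s^2t^2$, $D_5(s,t) = s^4t + 4s^2t^3$, and $D_n(s,t) = t\,D_{n-1}(s,t) + s^2 D_{n-2}(s,t)$ for $n > 5$. For every integer $n \geq 4$ there exists $\epsilon(n) > 0$ such that for all real $s,t$ with $t>0$ and $t \leq s \leq t(1+\epsilon(n))$, the maximum of $|\det A|$ over all $A \in \mathcal{G}_s^{n\times n}([0,t])$ equals $D_n(s,t)$.
   Context: For a real number $s$, a positive integer $n$ and a set $P \subseteq \mathbb{R}$, $\mathcal{G}_s^{n\times n}(P)$ denotes the set of all $n\times n$ real upper Hessenberg matrices $A=(a_{ij})$ with $a_{i+1,i} = s$ for $1\le i\le n-1$, $a_{ij}=0$ for $i > j+1$, and $a_{ij}\in P$ for all $i \le j$. *)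

theory Defs
  imports "Jordan_Normal_Form.Determinant"
begin

text \<open>The polynomials D_n(s,t); only the values for n \<ge> 4 are meaningful
  (D_4 = 3 s^2 t^2, D_5 = s^4 t + 4 s^2 t^3, D_n = t D_(n-1) + s^2 D_(n-2) for n > 5);
  values for n < 4 are set to 0 and never used.\<close>
fun D :: "nat \<Rightarrow> real \<Rightarrow> real \<Rightarrow> real" where
  "D 0 s t = 0"
| "D (Suc 0) s t = 0"
| "D (Suc (Suc n)) s t =
     (if n < 2 then 0
      else if n = 2 then 3 * s^2 * t^2
      else if n = 3 then s^4 * t + 4 * s^2 * t^3
      else t * D (Suc n) s t + s^2 * D n s t)"

definition hess_set :: "real \<Rightarrow> nat \<Rightarrow> real set \<Rightarrow> real mat set" where
  "hess_set s n P = {A \<in> carrier_mat n n.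
      \<forall>i<n. \<forall>j<n. (i = j + 1 \<longrightarrow> A $$ (i, j) = s)
                \<and> (i > j + 1 \<longrightarrow> A $$ (i, j) = 0)
                \<and> (i \<le> j \<longrightarrow> A $$ (i, j) \<in> P)}"

end

theory Submission
  imports Defs
begin

(*
  Expanding along the last column, the signed leading principal minors u_k = (-1)^k det A_k of a
  Hessenberg matrix with subdiagonal s and entries in [0,1] satisfy
  u_(m+1) = - sum_(i <= m) s^(m-i) a_im u_i.  Hence u_(m+1) lies between -alpha_m and beta_m, the
  s-weighted sums of the positive and negative parts of u_0, ..., u_m, and each step moves
  (alpha, beta) below (s alpha + beta, s beta) or (s alpha, s beta + alpha).  So |det A| is at
  most the value of the game that starts at (1, 0), makes n - 1 such moves and keeps the larger
  coordinate; conversely any sequence of moves is realised exactly by a 0-1 matrix.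

  After scaling to t = 1 and s = r with 1 <= r <= sqrt 2, the value after j + 3 moves is bounded
  by a maximum of six linear forms whose coefficients come from p_(k+2) = p_(k+1) + r^2 p_k, since
  a move maps each form below a form of the next stage.  At (1, 0) this bound is
  r p_(n-2) + r p_(n-3) = D_n(r, 1), and it is attained by alternating the two kinds of moves.
*)

section \<open>Leading minors of Hessenberg matrices\<close>

definition hess_entry :: "real \<Rightarrow> (nat \<Rightarrow> nat \<Rightarrow> real) \<Rightarrow> nat \<Rightarrow> nat \<Rightarrow> real" where
  "hess_entry s a i j = (if i = Suc j then s else if Suc j < i then 0 else a i j)"

definition hess_minor :: "real \<Rightarrow> (nat \<Rightarrow> nat \<Rightarrow> real) \<Rightarrow> nat \<Rightarrow> real" where
  "hess_minor s a k = det (mat k k (\<lambda>(i, j). hess_entry s a i j))"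

lemma det_hess_replace_last_col:
  "det (mat (Suc m) (Suc m) (\<lambda>(i, j). if j = m then c i else hess_entry s a i j))
     = (\<Sum>i\<le>m. (-s)^(m - i) * c i * hess_minor s a i)"
proof (induction m arbitrary: c)
  case 0
  let ?M = "mat 1 1 (\<lambda>(i, j). if j = 0 then c i else hess_entry s a i j)"
  have "mat_delete ?M 0 0 = mat 0 0 (\<lambda>(i, j). hess_entry s a i j)"
    by (rule eq_matI) auto
  then show ?case
    using laplace_expansion_row[of ?M 1 0] by (simp add: cofactor_def hess_minor_def)
next
  case (Suc m)
  let ?M = "mat (Suc (Suc m)) (Suc (Suc m)) (\<lambda>(i, j). if j = Suc m then c i else hess_entry s a i j)"
  have "det ?M = (\<Sum>j<Suc (Suc m). ?M $$ (Suc m, j) * cofactor ?M (Suc m) j)"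
    by (rule laplace_expansion_row) auto
  also have "\<dots> = s * cofactor ?M (Suc m) m + c (Suc m) * cofactor ?M (Suc m) (Suc m)"
    by (simp add: sum.neutral hess_entry_def)
  moreover have "mat_delete ?M (Suc m) (Suc m) = mat (Suc m) (Suc m) (\<lambda>(i, j). hess_entry s a i j)"
    by (rule eq_matI) (auto simp: mat_delete_def)
  moreover have "mat_delete ?M (Suc m) m
      = mat (Suc m) (Suc m) (\<lambda>(i, j). if j = m then c i else hess_entry s a i j)"
    by (rule eq_matI) (auto simp: mat_delete_def)
  ultimately show ?case
    by (simp add: cofactor_def hess_minor_def Suc.IH sum_distrib_left Suc_diff_le
        sum_negf[symmetric] algebra_simps)
qed

lemma hess_minor_0 [simp]: "hess_minor s a 0 = 1"
  by (simp add: hess_minor_def det_def)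

lemma hess_minor_Suc:
  "hess_minor s a (Suc m) = (\<Sum>i\<le>m. (-s)^(m - i) * a i m * hess_minor s a i)"
proof -
  have "hess_minor s a (Suc m)
      = det (mat (Suc m) (Suc m) (\<lambda>(i, j). if j = m then hess_entry s a i m else hess_entry s a i j))"
    unfolding hess_minor_def by (rule arg_cong[where f = det]) (rule eq_matI, auto)
  also have "\<dots> = (\<Sum>i\<le>m. (-s)^(m - i) * a i m * hess_minor s a i)"
    unfolding det_hess_replace_last_col by (rule sum.cong) (auto simp: hess_entry_def)
  finally show ?thesis .
qed

lemma det_hess_set:
  assumes "B \<in> hess_set s n P"
  shows "det B = hess_minor s (\<lambda>i j. B $$ (i, j)) n"
proof -
  have "B = mat n n (\<lambda>(i, j). hess_entry s (\<lambda>i j. B $$ (i, j)) i j)"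
    using assms unfolding hess_set_def by (intro eq_matI) (auto simp: hess_entry_def)
  then show ?thesis unfolding hess_minor_def by simp
qed

definition signed_minor :: "real \<Rightarrow> (nat \<Rightarrow> nat \<Rightarrow> real) \<Rightarrow> nat \<Rightarrow> real" where
  "signed_minor s a k = (-1)^k * hess_minor s a k"

lemma signed_minor_0 [simp]: "signed_minor s a 0 = 1"
  by (simp add: signed_minor_def)

lemma signed_minor_Suc:
  "signed_minor s a (Suc m) = - (\<Sum>i\<le>m. s^(m - i) * a i m * signed_minor s a i)"
proof -
  have "(-1::real)^Suc m * (-s)^(m - i) = - ((-1)^i * s^(m - i))" if im: "i \<le> m" for i
  proof -
    obtain d where "m = i + d" using le_Suc_ex[OF im] by blast
    then show ?thesis by (simp add: power_minus[of s] power_add algebra_simps)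
  qed
  then show ?thesis
    unfolding signed_minor_def hess_minor_Suc sum_distrib_left sum_negf[symmetric]
    by (intro sum.cong) (auto simp: algebra_simps)
qed

definition pos_mass :: "real \<Rightarrow> (nat \<Rightarrow> nat \<Rightarrow> real) \<Rightarrow> nat \<Rightarrow> real" where
  "pos_mass s a m = (\<Sum>i\<le>m. s^(m - i) * max (signed_minor s a i) 0)"

definition neg_mass :: "real \<Rightarrow> (nat \<Rightarrow> nat \<Rightarrow> real) \<Rightarrow> nat \<Rightarrow> real" where
  "neg_mass s a m = (\<Sum>i\<le>m. s^(m - i) * max (- signed_minor s a i) 0)"

lemma pos_mass_0 [simp]: "pos_mass s a 0 = 1"
  by (simp add: pos_mass_def)

lemma neg_mass_0 [simp]: "neg_mass s a 0 = 0"
  by (simp add: neg_mass_def)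

lemma pos_mass_Suc: "pos_mass s a (Suc m) = s * pos_mass s a m + max (signed_minor s a (Suc m)) 0"
  unfolding pos_mass_def by (simp add: sum_distrib_left Suc_diff_le algebra_simps)

lemma neg_mass_Suc: "neg_mass s a (Suc m) = s * neg_mass s a m + max (- signed_minor s a (Suc m)) 0"
  unfolding neg_mass_def by (simp add: sum_distrib_left Suc_diff_le algebra_simps)

lemma pos_mass_nonneg: "0 \<le> s \<Longrightarrow> 0 \<le> pos_mass s a m"
  unfolding pos_mass_def by (intro sum_nonneg) auto

lemma neg_mass_nonneg: "0 \<le> s \<Longrightarrow> 0 \<le> neg_mass s a m"
  unfolding neg_mass_def by (intro sum_nonneg) auto

lemma signed_minor_Suc_bounds:
  assumes "0 \<le> s" and entries: "\<And>i. i \<le> m \<Longrightarrow> a i m \<in> {0..1}"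
  shows "- pos_mass s a m \<le> signed_minor s a (Suc m)" "signed_minor s a (Suc m) \<le> neg_mass s a m"
proof -
  have weight: "- max u 0 \<le> - (x * u)" "- (x * u) \<le> max (- u) 0" if "x \<in> {0..1}" for x u :: real
    using that mult_left_le_one_le[of u x] mult_left_le_one_le[of "-u" x]
    by (auto simp: max_def mult_nonneg_nonneg mult_nonneg_nonpos)
  have u: "signed_minor s a (Suc m) = (\<Sum>i\<le>m. s^(m - i) * - (a i m * signed_minor s a i))"
    unfolding signed_minor_Suc by (simp add: sum_negf mult.assoc)
  have "- pos_mass s a m = (\<Sum>i\<le>m. s^(m - i) * - max (signed_minor s a i) 0)"
    unfolding pos_mass_def by (simp add: sum_negf)
  also have "\<dots> \<le> signed_minor s a (Suc m)"
    unfolding u using assms weight(1) by (intro sum_mono mult_left_mono) auto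
  finally show "- pos_mass s a m \<le> signed_minor s a (Suc m)" .
  show "signed_minor s a (Suc m) \<le> neg_mass s a m"
    unfolding u neg_mass_def using assms weight(2) by (intro sum_mono mult_left_mono) auto
qed

section \<open>A game bounding the determinant\<close>

fun game_value :: "real \<Rightarrow> nat \<Rightarrow> real \<Rightarrow> real \<Rightarrow> real" where
  "game_value r 0 a b = max a b"
| "game_value r (Suc k) a b = max (game_value r k (r * a + b) (r * b)) (game_value r k (r * a) (r * b + a))"

lemma game_value_mono:
  "0 \<le> r \<Longrightarrow> a \<le> a' \<Longrightarrow> b \<le> b' \<Longrightarrow> game_value r k a b \<le> game_value r k a' b'"
proof (induction k arbitrary: a b a' b')
  case (Suc k)
  then have "r * a + b \<le> r * a' + b'" "r * b \<le> r * b'" "r * a \<le> r * a'" "r * b + a \<le> r * b' + a'"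
    by (auto intro!: add_mono mult_left_mono)
  with Suc.prems show ?case by (simp only: game_value.simps) (intro max.mono Suc.IH)
qed (auto intro: max.mono)

lemma game_value_commute: "game_value r k a b = game_value r k b a"
  by (induction k arbitrary: a b) (simp_all add: max.commute)

lemma game_value_Suc_sym:
  "game_value r (Suc k) a b = max (game_value r k (r * a + b) (r * b)) (game_value r k (r * b + a) (r * a))"
  by (simp add: game_value_commute[of r k "r * a"])

lemma masses_Suc_le_game_value:
  assumes s: "0 \<le> s" and entries: "\<And>i. i \<le> m \<Longrightarrow> a i m \<in> {0..1}"
  shows "game_value s k (pos_mass s a (Suc m)) (neg_mass s a (Suc m))
           \<le> game_value s (Suc k) (pos_mass s a m) (neg_mass s a m)"
proof (cases "0 \<le> signed_minor s a (Suc m)")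
  case True
  then have "game_value s k (pos_mass s a (Suc m)) (neg_mass s a (Suc m))
      \<le> game_value s k (s * pos_mass s a m + neg_mass s a m) (s * neg_mass s a m)"
    using signed_minor_Suc_bounds[of s m a] assms
    by (intro game_value_mono) (simp_all add: pos_mass_Suc neg_mass_Suc)
  then show ?thesis by simp
next
  case False
  then have "game_value s k (pos_mass s a (Suc m)) (neg_mass s a (Suc m))
      \<le> game_value s k (s * pos_mass s a m) (s * neg_mass s a m + pos_mass s a m)"
    using signed_minor_Suc_bounds[of s m a] assms
    by (intro game_value_mono) (simp_all add: pos_mass_Suc neg_mass_Suc)
  then show ?thesis by simp
qed

lemma abs_signed_minor_le_game_value:
  assumes s: "0 \<le> s" and entries: "\<And>i j. i \<le> j \<Longrightarrow> j \<le> m \<Longrightarrow> a i j \<in> {0..1}"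
  shows "\<bar>signed_minor s a (Suc m)\<bar> \<le> game_value s m 1 0"
proof -
  have "game_value s (m - k) (pos_mass s a k) (neg_mass s a k) \<le> game_value s m 1 0" if "k \<le> m" for k
    using that
  proof (induction k)
    case (Suc k)
    have "game_value s (m - Suc k) (pos_mass s a (Suc k)) (neg_mass s a (Suc k))
        \<le> game_value s (Suc (m - Suc k)) (pos_mass s a k) (neg_mass s a k)"
      using Suc.prems by (intro masses_Suc_le_game_value[OF s] entries) auto
    also have "Suc (m - Suc k) = m - k" using Suc.prems by simp
    finally show ?case using Suc by simp
  qed simp
  from this[of m] have "max (pos_mass s a m) (neg_mass s a m) \<le> game_value s m 1 0" by simp
  moreover have "\<bar>signed_minor s a (Suc m)\<bar> \<le> max (pos_mass s a m) (neg_mass s a m)"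
    using signed_minor_Suc_bounds[of s m a] s entries by (auto simp: abs_le_iff)
  ultimately show ?thesis by linarith
qed

lemma abs_det_hess_le_game_value:
  assumes "0 \<le> s" "B \<in> hess_set s (Suc m) {0..1}"
  shows "\<bar>det B\<bar> \<le> game_value s m 1 0"
proof -
  have "\<bar>det B\<bar> = \<bar>signed_minor s (\<lambda>i j. B $$ (i, j)) (Suc m)\<bar>"
    unfolding det_hess_set[OF assms(2)] signed_minor_def by (simp add: abs_mult)
  also have "\<dots> \<le> game_value s m 1 0"
    using assms unfolding hess_set_def
    by (intro abs_signed_minor_le_game_value) auto
  finally show ?thesis .
qed

section \<open>The value of the game for 1 \<le> r \<le> sqrt 2\<close>

(* opt_seq r 0 = 1 / r only serves to make opt_seq r 2 = 2 r.  After k \<ge> 2 optimal moves the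
   position is (opt_seq r k, r * opt_seq r (k - 1)) up to order. *)
fun opt_seq :: "real \<Rightarrow> nat \<Rightarrow> real" where
  "opt_seq r 0 = 1 / r"
| "opt_seq r (Suc 0) = r"
| "opt_seq r (Suc (Suc k)) = opt_seq r (Suc k) + r^2 * opt_seq r k"

definition admissible :: "real \<Rightarrow> real \<Rightarrow> real \<Rightarrow> bool" where
  "admissible r x y \<longleftrightarrow> 0 < x \<and> r^2 * x \<le> y \<and> y \<le> 2 * x"

lemma admissible_step:
  assumes "1 \<le> r" "r^2 \<le> 2" "admissible r x y"
  shows "admissible r y (y + r^2 * x)"
proof -
  have "(r^2 - 1) * y \<le> (r^2 - 1) * (2 * x)" "(r^2 - 2) * x \<le> 0" "0 < r^2 * x"
    using assms by (auto simp: admissible_def one_le_power mult_nonpos_nonneg intro!: mult_left_mono)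
  then show ?thesis
    using assms by (auto simp: admissible_def algebra_simps intro: add_pos_nonneg)
qed

lemma admissible_bounds:
  assumes "1 \<le> r" "admissible r x y"
  shows "r * x \<le> y" "r * y \<le> y + r^2 * x"
proof -
  have x: "0 < x" and rrx: "r^2 * x \<le> y" and y2x: "y \<le> 2 * x"
    using assms(2) by (auto simp: admissible_def)
  have r_rr: "r \<le> r^2" using assms(1) mult_left_mono[of 1 r r] by (simp add: power2_eq_square)
  then have "r * x \<le> r^2 * x" using x by (simp add: mult_right_mono)
  then show "r * x \<le> y" using rrx by simp
  have "(r - 1) * y \<le> (r - 1) * (2 * x)" using assms(1) y2x by (intro mult_left_mono) auto
  moreover have "(r - 1) * 2 \<le> r^2"
    using zero_le_power2[of "r - 1"] by (simp add: power2_eq_square algebra_simps)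
  then have "(r - 1) * 2 * x \<le> r^2 * x"
    using x by (intro mult_right_mono) auto
  ultimately show "r * y \<le> y + r^2 * x" by (simp add: algebra_simps)
qed

lemma admissible_opt_seq:
  assumes "1 \<le> r" "r^2 \<le> 2"
  shows "admissible r (opt_seq r k) (opt_seq r (Suc k))"
proof (induction k)
  case 0
  then show ?case using assms by (simp add: admissible_def power2_eq_square field_simps)
next
  case (Suc k)
  then show ?case using admissible_step[OF assms] by simp
qed

definition sym_form :: "real \<Rightarrow> real \<Rightarrow> real \<Rightarrow> real \<Rightarrow> real" where
  "sym_form c d a b = max (c * a + d * b) (d * a + c * b)"

lemma sym_form_commute: "sym_form c d a b = sym_form c d b a"
  by (simp add: sym_form_def max.commute add.commute)

lemma sym_form_1_0 [simp]: "sym_form c d 1 0 = max c d"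
  by (simp add: sym_form_def max.commute)

lemma le_sym_form:
  assumes "0 \<le> a" "0 \<le> b" "c \<le> d'" "d \<le> c'"
  shows "c * a + d * b \<le> sym_form c' d' a b"
proof -
  have "c * a + d * b \<le> d' * a + c' * b"
    using assms by (intro add_mono mult_right_mono)
  then show ?thesis unfolding sym_form_def by linarith
qed

lemma sym_form_step_le:
  assumes "0 \<le> a" "0 \<le> b"
    and "r * c \<le> d1" "c + r * d \<le> c1" and "r * d \<le> d2" "d + r * c \<le> c2"
  shows "sym_form c d (r * a + b) (r * b) \<le> max (sym_form c1 d1 a b) (sym_form c2 d2 a b)"
proof -
  have "c * (r * a + b) + d * (r * b) = (r * c) * a + (c + r * d) * b"
    "d * (r * a + b) + c * (r * b) = (r * d) * a + (d + r * c) * b"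
    by (simp_all add: algebra_simps)
  then show ?thesis
    unfolding sym_form_def[of c d] by (simp only:) (intro max.mono le_sym_form assms)
qed

(* At (x, y) = (1 / r, r) the three forms are exactly those reached by three moves from (a, b). *)
definition game_bound :: "real \<Rightarrow> real \<Rightarrow> real \<Rightarrow> real \<Rightarrow> real \<Rightarrow> real" where
  "game_bound r x y a b =
     (let z = y + r^2 * x in
      max (sym_form (r * z + r * y) (r^2 * y) a b)
        (max (sym_form (r * y + (r + r^3) * x) (r^2 * y + r^2 * x) a b)
          (sym_form (z + r^2 * y) (r * z) a b)))"

lemma game_bound_commute: "game_bound r x y a b = game_bound r x y b a"
  unfolding game_bound_def by (simp add: sym_form_commute[of _ _ a])

lemma ratio_poly_bounds:
  fixes r :: real
  assumes "1 \<le> r" "r^2 \<le> 2"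
  shows "r \<le> r^2" "0 \<le> r * (2 - r)" "0 \<le> r - r^2 + r^3" "0 \<le> 1 - r + 2 * r^2 - r^3"
proof -
  show r_rr: "r \<le> r^2" using assms(1) mult_left_mono[of 1 r r] by (simp add: power2_eq_square)
  then show "0 \<le> r * (2 - r)" using assms by simp
  have "r^2 \<le> r^3" using mult_left_mono[OF r_rr, of r] assms(1) by (simp add: power2_eq_square power3_eq_cube)
  then show "0 \<le> r - r^2 + r^3" using assms(1) by simp
  have "r^3 \<le> 2 * r" using assms by (simp add: power3_eq_cube power2_eq_square mult_left_mono)
  then show "0 \<le> 1 - r + 2 * r^2 - r^3"
    using assms(1) mult_nonneg_nonneg[of "2 * r - 1" "r - 1"] by (simp add: algebra_simps power2_eq_square)
qed

lemma game_bound_step: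
  assumes r: "1 \<le> r" "r^2 \<le> 2" and xy: "admissible r x y" and ab: "0 \<le> a" "0 \<le> b"
  shows "game_bound r x y (r * a + b) (r * b) \<le> game_bound r y (y + r^2 * x) a b"
proof -
  define z where "z = y + r^2 * x"
  have x: "0 \<le> x" and rrx: "r^2 * x \<le> y"
    using xy by (auto simp: admissible_def)
  have rx: "0 \<le> y - r * x" and ry: "0 \<le> z - r * y"
    using admissible_bounds[OF r(1) xy] unfolding z_def by auto
  note poly = ratio_poly_bounds[OF r]
  have "0 \<le> r * x" using r x by simp
  with rx have y: "0 \<le> y" by simp
  have X: "sym_form (r * z + r * y) (r^2 * y) (r * a + b) (r * b)
      \<le> max (sym_form (r * z + (r + r^3) * y) (r^2 * z + r^2 * y) a b)
             (sym_form (r * (z + r^2 * y) + r * z) (r^2 * z) a b)"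
  proof (rule sym_form_step_le[OF ab])
    show "r * (r^2 * y) \<le> r^2 * z" using mult_left_mono[OF ry, of "r^2"] by (simp add: algebra_simps power2_eq_square power3_eq_cube)
    show "r^2 * y + r * (r * z + r * y) \<le> r * (z + r^2 * y) + r * z"
      using mult_nonneg_nonneg[OF poly(2) ry] by (simp add: algebra_simps power2_eq_square power3_eq_cube)
  qed (simp_all add: algebra_simps power2_eq_square power3_eq_cube)
  have Y: "sym_form (r * y + (r + r^3) * x) (r^2 * y + r^2 * x) (r * a + b) (r * b)
      \<le> max (sym_form (z + r^2 * y + r^2 * z) (r * (z + r^2 * y)) a b)
             (sym_form (z + r^2 * y + r^2 * z) (r * (z + r^2 * y)) a b)"
  proof (rule sym_form_step_le[OF ab])
    show "r * (r * y + (r + r^3) * x) \<le> r * (z + r^2 * y)"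
      using mult_nonneg_nonneg[OF poly(3) rx] unfolding z_def by (simp add: algebra_simps power2_eq_square power3_eq_cube)
    show "r * y + (r + r^3) * x + r * (r^2 * y + r^2 * x) \<le> z + r^2 * y + r^2 * z"
      using mult_nonneg_nonneg[OF poly(4) rx] unfolding z_def by (simp add: algebra_simps power2_eq_square power3_eq_cube)
    show "r * (r^2 * y + r^2 * x) \<le> r * (z + r^2 * y)"
      using r y unfolding z_def by (simp add: algebra_simps power2_eq_square power3_eq_cube)
    show "r^2 * y + r^2 * x + r * (r * y + (r + r^3) * x) \<le> z + r^2 * y + r^2 * z"
      using rrx unfolding z_def by (simp add: algebra_simps power2_eq_square power3_eq_cube)
  qed
  have Z: "sym_form (z + r^2 * y) (r * z) (r * a + b) (r * b)
      \<le> max (sym_form (z + r^2 * y + r^2 * z) (r * (z + r^2 * y)) a b)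
             (sym_form (r * (z + r^2 * y) + r * z) (r^2 * z) a b)"
    by (rule sym_form_step_le[OF ab]) (simp_all add: algebra_simps power2_eq_square)
  show ?thesis
    using X Y Z unfolding game_bound_def Let_def z_def[symmetric]
    by (smt (verit) max.absorb1 max.cobounded1 max.cobounded2 max.bounded_iff)
qed

lemma game_bound_initial:
  assumes "r \<noteq> 0"
  shows "game_bound r (1 / r) r a b =
    max (sym_form (3 * r^2) (r^3) a b) (max (sym_form (1 + 2 * r^2) (r + r^3) a b) (sym_form (2 * r + r^3) (2 * r^2) a b))"
proof -
  have "(r + r^3) * (1 / r) = 1 + r^2" using assms by (simp add: field_simps power2_eq_square power3_eq_cube)
  then show ?thesis
    using assms unfolding game_bound_def Let_def by (simp add: algebra_simps power2_eq_square power3_eq_cube)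
qed

lemma game_value_1_le: "0 \<le> r \<Longrightarrow> 0 \<le> a \<Longrightarrow> 0 \<le> b \<Longrightarrow> game_value r 1 a b \<le> sym_form r 1 a b"
  by (simp add: sym_form_def max_def)

lemma game_value_3_le_game_bound:
  assumes r: "0 < r" and ab: "0 \<le> a" "0 \<le> b"
  shows "game_value r 3 a b \<le> game_bound r (1 / r) r a b"
proof -
  have half: "game_value r 2 (r * a + b) (r * b) \<le> game_bound r (1 / r) r a b"
    if "0 \<le> a" "0 \<le> b" for a b
  proof -
    define x y where "x = r * a + b" and "y = r * b"
    have xy: "0 \<le> x" "0 \<le> y" using r that by (simp_all add: x_def y_def)
    have "game_value r 2 x y \<le> max (sym_form r 1 (r * x + y) (r * y)) (sym_form r 1 (r * y + x) (r * x))"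
      unfolding Suc_1[symmetric] game_value_Suc_sym[of r 1] using r xy
      by (intro max.mono game_value_1_le) auto
    also have "\<dots> \<le> game_bound r (1 / r) r a b"
    proof -
      have "r * (r * x + y) + 1 * (r * y) \<le> sym_form (3 * r^2) (r^3) a b"
        "1 * (r * x + y) + r * (r * y) \<le> sym_form (2 * r + r^3) (2 * r^2) a b"
        "r * (r * y + x) + 1 * (r * x) \<le> sym_form (2 * r + r^3) (2 * r^2) a b"
        "1 * (r * y + x) + r * (r * x) \<le> sym_form (1 + 2 * r^2) (r + r^3) a b"
        using le_sym_form[OF that, of "r^3" "r^3" "3 * r^2" "3 * r^2"]
          le_sym_form[OF that, of "r^2" "2 * r^2" "2 * r + r^3" "2 * r + r^3"]
          le_sym_form[OF that, of "2 * r^2" "2 * r^2" "2 * r + r^3" "2 * r + r^3"]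
          le_sym_form[OF that, of "r + r^3" "r + r^3" "1 + 2 * r^2" "1 + 2 * r^2"] r
        by (simp_all add: x_def y_def algebra_simps power2_eq_square power3_eq_cube)
      then show ?thesis
        unfolding game_bound_initial[OF r[THEN less_imp_neq, symmetric]] sym_form_def[of r 1]
        by (smt (verit) max.absorb1 max.cobounded1 max.cobounded2 max.bounded_iff)
    qed
    finally show ?thesis unfolding x_def y_def .
  qed
  have "game_value r (Suc 2) a b \<le> game_bound r (1 / r) r a b"
    unfolding game_value_Suc_sym
    using half[OF ab] half[OF ab(2,1)] by (simp add: game_bound_commute[of r _ _ b a])
  then show ?thesis by (simp add: numeral_3_eq_3)
qed

lemma game_value_le_game_bound:
  assumes r: "1 \<le> r" "r^2 \<le> 2"
  shows "0 \<le> a \<Longrightarrow> 0 \<le> b \<Longrightarrow> game_value r (j + 3) a b \<le> game_bound r (opt_seq r j) (opt_seq r (Suc j)) a b"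
proof (induction j arbitrary: a b)
  case 0
  then show ?case using game_value_3_le_game_bound[of r a b] r by simp
next
  case (Suc j)
  let ?x = "opt_seq r j" and ?y = "opt_seq r (Suc j)"
  have step: "game_value r (j + 3) (r * a + b) (r * b) \<le> game_bound r ?y (?y + r^2 * ?x) a b"
    if "0 \<le> a" "0 \<le> b" for a b
  proof -
    have "0 \<le> r * a + b" "0 \<le> r * b" using r that by auto
    then show ?thesis by (rule order_trans[OF Suc.IH game_bound_step[OF r admissible_opt_seq[OF r] that]])
  qed
  show ?case
    using step[OF Suc.prems] step[OF Suc.prems(2,1)]
    unfolding add_Suc game_value_Suc_sym game_bound_commute[of r _ _ b a]
    by (simp add: add.commute)
qed

definition max_det :: "real \<Rightarrow> nat \<Rightarrow> real" where
  "max_det r n = r * opt_seq r (n - 2) + r * opt_seq r (n - 3)"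

lemma game_bound_1_0:
  assumes r: "1 \<le> r" "r^2 \<le> 2" and xy: "admissible r x y"
  shows "game_bound r x y 1 0 = r * (y + r^2 * x) + r * y"
proof -
  define z where "z = y + r^2 * x"
  have x: "0 < x" and rrx: "r^2 * x \<le> y"
    using xy by (auto simp: admissible_def)
  have rx: "r * x \<le> y" and ry: "r * y \<le> z"
    using admissible_bounds[OF r(1) xy] unfolding z_def by auto
  have y: "0 \<le> y" using x r rx mult_nonneg_nonneg[of r x] by linarith
  have "r^2 * y \<le> r * z" using mult_left_mono[OF ry, of r] r by (simp add: power2_eq_square algebra_simps)
  moreover have "x \<le> y" using rx x r mult_right_mono[of 1 r x] by linarith
  then have "r * y + (r + r^3) * x \<le> r * z + r * y"
    using mult_left_mono[of x y r] r unfolding z_def by (simp add: algebra_simps power2_eq_square power3_eq_cube)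
  moreover have "r^2 * y + r^2 * x \<le> r * z + r * y"
  proof -
    have "0 \<le> r * (2 - r) * y + r^2 * (r - 1) * x"
      using r ratio_poly_bounds(1)[OF r] x y by (intro add_nonneg_nonneg mult_nonneg_nonneg) auto
    then show ?thesis unfolding z_def by (simp add: algebra_simps power2_eq_square power3_eq_cube)
  qed
  moreover have "z + r^2 * y \<le> r * z + r * y"
    using mult_left_mono[of "r * y" z "r - 1"] ry r by (simp add: algebra_simps power2_eq_square)
  moreover have "0 \<le> r * y" using r y by simp
  ultimately show ?thesis
    unfolding game_bound_def Let_def sym_form_1_0 z_def[symmetric]
    by (intro antisym max.boundedI max.coboundedI1) auto
qed

lemma abs_det_le_max_det:
  assumes r: "1 \<le> r" "r^2 \<le> 2" and n: "4 \<le> n" and B: "B \<in> hess_set r n {0..1}"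
  shows "\<bar>det B\<bar> \<le> max_det r n"
proof -
  define j where "j = n - 4"
  have j: "n = Suc (j + 3)" using n by (simp add: j_def)
  have "\<bar>det B\<bar> \<le> game_value r (j + 3) 1 0"
    using abs_det_hess_le_game_value[of r B "j + 3"] r B j by simp
  also have "\<dots> \<le> game_bound r (opt_seq r j) (opt_seq r (Suc j)) 1 0"
    by (rule game_value_le_game_bound[OF r]) auto
  also have "\<dots> = max_det r n"
    unfolding game_bound_1_0[OF r admissible_opt_seq[OF r]] max_det_def j by (simp add: numeral_eq_Suc)
  finally show ?thesis .
qed

section \<open>An extremal 0-1 matrix\<close>

(* Column j selects exactly the rows i whose minor has the sign opposite to the one prescribed for
   minor j + 1, so every term of the expansion pushes that minor the same way. *)
definition sign_pattern :: "(nat \<Rightarrow> bool) \<Rightarrow> nat \<Rightarrow> nat \<Rightarrow> real" where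
  "sign_pattern \<sigma> i j = (if \<sigma> i = \<sigma> (Suc j) then 0 else 1)"

lemma signed_minor_sign_pattern_Suc:
  assumes signs: "\<And>i. i \<le> k \<Longrightarrow> if \<sigma> i then 0 \<le> signed_minor s (sign_pattern \<sigma>) i
                                   else signed_minor s (sign_pattern \<sigma>) i \<le> 0"
  shows "signed_minor s (sign_pattern \<sigma>) (Suc k) =
           (if \<sigma> (Suc k) then neg_mass s (sign_pattern \<sigma>) k else - pos_mass s (sign_pattern \<sigma>) k)"
proof (cases "\<sigma> (Suc k)")
  case True
  have "signed_minor s (sign_pattern \<sigma>) (Suc k) = neg_mass s (sign_pattern \<sigma>) k"
    unfolding signed_minor_Suc neg_mass_def sum_negf[symmetric]
    using True signs by (intro sum.cong) (auto simp: sign_pattern_def split: if_splits)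
  with True show ?thesis by simp
next
  case False
  then show ?thesis
    unfolding signed_minor_Suc pos_mass_def
    using signs by (auto intro!: sum.cong simp: sign_pattern_def split: if_splits)
qed

lemma signed_minor_sign_pattern_sign:
  assumes "0 \<le> s" "\<sigma> 0"
  shows "if \<sigma> k then 0 \<le> signed_minor s (sign_pattern \<sigma>) k else signed_minor s (sign_pattern \<sigma>) k \<le> 0"
proof (induction k rule: less_induct)
  case (less k)
  show ?case
  proof (cases k)
    case 0
    then show ?thesis using assms(2) by simp
  next
    case (Suc m)
    then show ?thesis
      using signed_minor_sign_pattern_Suc[of m \<sigma> s] less pos_mass_nonneg[OF assms(1)] neg_mass_nonneg[OF assms(1)]
      by simp
  qed
qed

lemma masses_sign_pattern_Suc:
  assumes "0 \<le> s" "\<sigma> 0"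
  defines "\<alpha> \<equiv> pos_mass s (sign_pattern \<sigma>)" and "\<beta> \<equiv> neg_mass s (sign_pattern \<sigma>)"
  shows "\<alpha> (Suc k) = (if \<sigma> (Suc k) then s * \<alpha> k + \<beta> k else s * \<alpha> k)"
    and "\<beta> (Suc k) = (if \<sigma> (Suc k) then s * \<beta> k else s * \<beta> k + \<alpha> k)"
  using signed_minor_sign_pattern_Suc[OF signed_minor_sign_pattern_sign[of s \<sigma>, OF assms(1,2)], of k]
    pos_mass_nonneg[OF assms(1)] neg_mass_nonneg[OF assms(1)]
  unfolding \<alpha>_def \<beta>_def pos_mass_Suc neg_mass_Suc by auto

lemma abs_det_sign_pattern:
  assumes "0 \<le> s" "\<sigma> 0"
  shows "\<bar>det (mat (Suc k) (Suc k) (\<lambda>(i, j). hess_entry s (sign_pattern \<sigma>) i j))\<bar> =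
           (if \<sigma> (Suc k) then neg_mass s (sign_pattern \<sigma>) k else pos_mass s (sign_pattern \<sigma>) k)"
proof -
  have "\<bar>det (mat (Suc k) (Suc k) (\<lambda>(i, j). hess_entry s (sign_pattern \<sigma>) i j))\<bar>
      = \<bar>signed_minor s (sign_pattern \<sigma>) (Suc k)\<bar>"
    by (simp add: signed_minor_def hess_minor_def abs_mult)
  then show ?thesis
    using signed_minor_sign_pattern_Suc[OF signed_minor_sign_pattern_sign[of s \<sigma>, OF assms], of k]
      pos_mass_nonneg[OF assms(1)] neg_mass_nonneg[OF assms(1)]
    by simp
qed

(* Moves 1 and 2 are of the second kind, the moves then alternate, move n - 1 repeats move n - 2,
   and the sign at n selects the larger coordinate. *)
definition extremal_signs :: "nat \<Rightarrow> nat \<Rightarrow> bool" where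
  "extremal_signs n k \<longleftrightarrow> k = 0 \<or> (3 \<le> k \<and> (odd k \<longleftrightarrow> k \<le> n - 2))"

lemma masses_extremal_signs:
  assumes s: "0 < s" and k: "2 \<le> k" "k \<le> n - 2"
  defines "\<alpha> \<equiv> pos_mass s (sign_pattern (extremal_signs n))"
    and "\<beta> \<equiv> neg_mass s (sign_pattern (extremal_signs n))"
  shows "(\<alpha> k, \<beta> k) = (if odd k then (opt_seq s k, s * opt_seq s (k - 1))
                                 else (s * opt_seq s (k - 1), opt_seq s k))"
  using k
proof (induction k rule: nat_induct_at_least)
  case base
  have "\<not> extremal_signs n 1" "\<not> extremal_signs n 2" by (simp_all add: extremal_signs_def)
  then show ?case
    using masses_sign_pattern_Suc[of s "extremal_signs n" 0] masses_sign_pattern_Suc[of s "extremal_signs n" 1] s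
    by (simp add: \<alpha>_def \<beta>_def extremal_signs_def numeral_2_eq_2 power2_eq_square)
next
  case (Suc k)
  then obtain j where j: "k = Suc j" by (cases k) auto
  have "extremal_signs n (Suc k) = odd (Suc k)" using Suc by (simp add: extremal_signs_def)
  then show ?case
    using masses_sign_pattern_Suc[of s "extremal_signs n" k] Suc s
    by (auto simp: \<alpha>_def \<beta>_def extremal_signs_def j algebra_simps power2_eq_square)
qed

lemma exists_hess_abs_det_eq_max_det:
  assumes s: "0 < s" and n: "4 \<le> n"
  shows "\<exists>B \<in> hess_set s n {0..1}. \<bar>det B\<bar> = max_det s n"
proof
  define \<sigma> where "\<sigma> = extremal_signs n"
  define k where "k = n - 2"
  let ?\<alpha> = "pos_mass s (sign_pattern \<sigma>)" and ?\<beta> = "neg_mass s (sign_pattern \<sigma>)"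
  let ?B = "mat n n (\<lambda>(i, j). hess_entry s (sign_pattern \<sigma>) i j)"
  show "?B \<in> hess_set s n {0..1}"
    unfolding hess_set_def by (auto simp: hess_entry_def sign_pattern_def)
  have nk: "n = Suc (Suc k)" "2 \<le> k" using n by (simp_all add: k_def)
  have \<sigma>: "\<sigma> 0" "\<sigma> (Suc k) = odd k" "\<sigma> (Suc (Suc k)) = even k"
    using nk by (auto simp: \<sigma>_def extremal_signs_def)
  have traj: "(?\<alpha> k, ?\<beta> k) = (if odd k then (opt_seq s k, s * opt_seq s (k - 1))
                                   else (s * opt_seq s (k - 1), opt_seq s k))"
    unfolding \<sigma>_def using masses_extremal_signs[OF s nk(2)] by (simp add: k_def)
  have "\<bar>det ?B\<bar> = (if \<sigma> (Suc (Suc k)) then ?\<beta> (Suc k) else ?\<alpha> (Suc k))"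
    unfolding nk(1) using abs_det_sign_pattern s \<sigma>(1) by simp
  also have "\<dots> = s * opt_seq s k + s * opt_seq s (k - 1)"
    using masses_sign_pattern_Suc[of s \<sigma> k] s \<sigma> traj by (auto split: if_splits)
  also have "\<dots> = max_det s n"
    unfolding max_det_def by (simp add: k_def numeral_eq_Suc)
  finally show "\<bar>det ?B\<bar> = max_det s n" .
qed

section \<open>The polynomials D and scaling\<close>

lemma max_det_4: "r \<noteq> 0 \<Longrightarrow> max_det r 4 = 3 * r^2"
  by (simp add: max_det_def numeral_eq_Suc power2_eq_square)

lemma max_det_5: "r \<noteq> 0 \<Longrightarrow> max_det r 5 = r^4 + 4 * r^2"
  by (simp add: max_det_def numeral_eq_Suc power2_eq_square algebra_simps)

lemma max_det_Suc_Suc: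
  assumes "4 \<le> n"
  shows "max_det r (Suc (Suc n)) = max_det r (Suc n) + r^2 * max_det r n"
proof -
  obtain m where "n = m + 4" using assms by (metis add.commute le_Suc_ex)
  then show ?thesis by (simp add: max_det_def numeral_eq_Suc algebra_simps)
qed

lemma D_eq_max_det:
  assumes "t \<noteq> 0" "s \<noteq> 0" "4 \<le> n"
  shows "D n s t = t^n * max_det (s / t) n"
proof -
  let ?P = "\<lambda>n. D n s t = t^n * max_det (s / t) n"
  have "?P (k + 4) \<and> ?P (Suc (k + 4))" for k
  proof (induction k)
    case 0
    have "D 4 s t = 3 * s^2 * t^2" "D 5 s t = s^4 * t + 4 * s^2 * t^3"
      by (simp_all add: numeral_eq_Suc)
    then show ?case
      using assms by (simp add: max_det_4 max_det_5) (simp add: power_divide field_simps eval_nat_numeral)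
  next
    case (Suc k)
    define m where "m = k + 4"
    have IH: "D m s t = t^m * max_det (s / t) m" "D (Suc m) s t = t^(Suc m) * max_det (s / t) (Suc m)"
      using Suc.IH unfolding m_def by simp_all
    have "D (Suc (Suc m)) s t = t * D (Suc m) s t + s^2 * D m s t"
      by (simp only: D.simps(3)) (simp add: m_def)
    also have "\<dots> = t^(Suc (Suc m)) * (max_det (s / t) (Suc m) + (s / t)^2 * max_det (s / t) m)"
      using IH assms(1) by (simp add: power_divide field_simps power2_eq_square)
    also have "\<dots> = t^(Suc (Suc m)) * max_det (s / t) (Suc (Suc m))"
      using max_det_Suc_Suc[of m "s / t"] by (simp add: m_def)
    finally show ?case using Suc.IH by (simp add: m_def)
  qed
  from this[of "n - 4"] show ?thesis using assms(3) by simp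
qed

lemma hess_set_scale:
  assumes "0 < t"
  shows "hess_set (t * r) n {0..t} = (\<lambda>B. t \<cdot>\<^sub>m B) ` hess_set r n {0..1}"
proof
  show "(\<lambda>B. t \<cdot>\<^sub>m B) ` hess_set r n {0..1} \<subseteq> hess_set (t * r) n {0..t}"
    using assms by (auto simp: hess_set_def mult_le_cancel_left1)
  show "hess_set (t * r) n {0..t} \<subseteq> (\<lambda>B. t \<cdot>\<^sub>m B) ` hess_set r n {0..1}"
  proof
    fix A assume A: "A \<in> hess_set (t * r) n {0..t}"
    then have "A = t \<cdot>\<^sub>m ((1 / t) \<cdot>\<^sub>m A)" "(1 / t) \<cdot>\<^sub>m A \<in> hess_set r n {0..1}"
      using assms by (auto simp: hess_set_def)
    then show "A \<in> (\<lambda>B. t \<cdot>\<^sub>m B) ` hess_set r n {0..1}" by blast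
  qed
qed

theorem theorem2p8:
  fixes n :: nat
  assumes "n \<ge> 4"
  shows "\<exists>\<epsilon>>0. \<forall>s t :: real. 0 < t \<and> t \<le> s \<and> s \<le> t * (1 + \<epsilon>) \<longrightarrow>
           (\<exists>A\<in>hess_set s n {0..t}. \<bar>det A\<bar> = D n s t) \<and>
           (\<forall>A\<in>hess_set s n {0..t}. \<bar>det A\<bar> \<le> D n s t)"
proof (intro exI[of _ "1/4"] conjI allI impI)
  fix s t :: real
  assume st: "0 < t \<and> t \<le> s \<and> s \<le> t * (1 + 1/4)"
  define r where "r = s / t"
  have t: "0 < t" and s: "s = t * r" using st by (auto simp: r_def)
  have r1: "1 \<le> r" and "r \<le> 5/4" using st by (simp_all add: r_def field_simps)
  then have "r^2 \<le> (5/4)^2" by (intro power_mono) auto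
  also have "\<dots> \<le> 2" by (simp add: power2_eq_square)
  finally have r: "1 \<le> r" "r^2 \<le> 2" using r1 by simp_all
  have D: "D n s t = t^n * max_det r n"
    unfolding r_def using D_eq_max_det[of t s n] assms st by simp
  have det: "\<bar>det (t \<cdot>\<^sub>m B)\<bar> = t^n * \<bar>det B\<bar>" if "B \<in> hess_set r n {0..1}" for B
    using that t by (auto simp: hess_set_def abs_mult)
  show "\<exists>A\<in>hess_set s n {0..t}. \<bar>det A\<bar> = D n s t"
    using exists_hess_abs_det_eq_max_det[of r n] r assms det
    unfolding D unfolding s hess_set_scale[OF t] by fastforce
  show "\<forall>A\<in>hess_set s n {0..t}. \<bar>det A\<bar> \<le> D n s t"
    using abs_det_le_max_det[OF r assms] det t
    unfolding D unfolding s hess_set_scale[OF t] by (auto intro: mult_left_mono)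
qed (simp)

end
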